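(* Let $f(x)=\frac1n\sum_{i=1}^n f_i(x)$ on $\mathbb{R}^d$, where each $f_i$ is differentiable, lower bounded and $L_i$-smooth, $L_{\max}=\max_iL_i$, and assume $f$ is $\mu$-PL ($\mu>0$). Fix $\lambda\in[0,1]$ and consider deterministic Unified SAM $$x^{t+1}=x^t-\gamma\,\nabla f\!\left(x^t+\rho\left(1-\lambda+\frac{\lambda}{\|\nabla f(x^t)\|}\right)\nabla f(x^t)\right)$$ with $\rho\le\frac{1}{L_{\max}(1+2(1-\lambda)^2)}$ and $\gamma\le\frac{1-L_{\max}\rho(1+2(1-\lambda)^2)}{2L_{\max}[2L_{\max}^2\rho^2(1-\lambda)^2+1]}$. Then for all $t\ge0$ $$f(x^t)-f(x^* )\le(1-\gamma\mu)^t[f(x^0)-f(x^* )]+\frac{L_{\max}\rho(1+2\gamma L_{\max}^2\rho)\lambda^2}{\mu}.$$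
   Context: Each $f_i$ is $L_i$-smooth: $\|\nabla f_i(x)-\nabla f_i(y)\|\le L_i\|x-y\|$. The set of minimizers of $f$ is nonempty and $x^*$ is a minimizer. $f$ is $\mu$-PL if $\|\nabla f(x)\|^2\ge 2\mu(f(x)-f(x^* ))$ for all $x$. The deterministic method is the full-batch case of Unified SAM, i.e. the stochastic gradient is the exact gradient $\nabla f$. *)

theory Defs
  imports "HOL-Analysis.Analysis"
begin

end

theory Submission
  imports Defs
begin

(* The average F of the f i has gradient G = average of the g i, which is Lmax-Lipschitz, so F
   satisfies the descent lemma with constant Lmax.  A Unified SAM step evaluates the gradient at a
   point at distance at most rho ((1 - lam) |G x| + lam) from x, so it differs from G x by at most
   Lmax times that distance.  Plugging this perturbation into the descent lemma and absorbing the
   cross terms by Young's inequality, the stepsize conditions leave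
     F x' <= F x - gamma/2 |G x|^2 + gamma K,   K = Lmax rho (1 + 2 gamma Lmax^2 rho) lam^2.
   The PL inequality turns this into e' <= (1 - gamma mu) e + gamma K for the suboptimality e,
   which unrolls to the claim. *)

lemma has_real_derivative_gderiv_along_line:
  fixes F :: "'a::real_inner \<Rightarrow> real"
  assumes "\<And>y. GDERIV F y :> G y"
  shows "((\<lambda>s. F (x + s *\<^sub>R d)) has_real_derivative G (x + s *\<^sub>R d) \<bullet> d) (at s)"
proof -
  have "((\<lambda>s. x + s *\<^sub>R d) has_derivative (\<lambda>h. h *\<^sub>R d)) (at s)"
    by (auto intro!: derivative_eq_intros)
  moreover have "(F has_derivative (\<lambda>h. h \<bullet> G (x + s *\<^sub>R d))) (at (x + s *\<^sub>R d))"
    using assms unfolding gderiv_def by blast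
  ultimately have "((\<lambda>s. F (x + s *\<^sub>R d)) has_derivative (\<lambda>h. (h *\<^sub>R d) \<bullet> G (x + s *\<^sub>R d))) (at s)"
    by (rule has_derivative_compose[unfolded o_def])
  then show ?thesis
    unfolding has_field_derivative_def
    by (rule has_derivative_eq_rhs) (auto simp: inner_commute)
qed

lemma lipschitz_gradient_upper_bound:
  fixes F :: "'a::real_inner \<Rightarrow> real"
  assumes gderiv: "\<And>y. GDERIV F y :> G y"
    and lipschitz: "\<And>y z. norm (G y - G z) \<le> L * norm (y - z)"
  shows "F y \<le> F x + G x \<bullet> (y - x) + L / 2 * (norm (y - x))\<^sup>2"
proof -
  define d where "d = y - x"
  define h where "h s = F (x + s *\<^sub>R d) - s * (G x \<bullet> d) - L / 2 * s\<^sup>2 * (norm d)\<^sup>2" for s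
  define h' where "h' s = (G (x + s *\<^sub>R d) - G x) \<bullet> d - L * s * (norm d)\<^sup>2" for s
  have "(h has_real_derivative h' s) (at s)" for s
    unfolding h_def h'_def inner_diff_left
    by (rule derivative_eq_intros has_real_derivative_gderiv_along_line[OF gderiv] | simp)+
  moreover have "h' s \<le> 0" if "0 \<le> s" for s
  proof -
    have "(G (x + s *\<^sub>R d) - G x) \<bullet> d \<le> norm (G (x + s *\<^sub>R d) - G x) * norm d"
      by (rule norm_cauchy_schwarz)
    also have "\<dots> \<le> L * norm (s *\<^sub>R d) * norm d"
      using lipschitz[of "x + s *\<^sub>R d" x] by (intro mult_right_mono) auto
    finally show ?thesis
      using that by (simp add: h'_def power2_eq_square mult_ac)
  qed
  ultimately have "h 1 \<le> h 0"
    by (intro DERIV_nonpos_imp_nonincreasing[of 0 1]) auto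
  then show ?thesis
    by (simp add: h_def d_def algebra_simps)
qed

lemma lipschitz_gradient_norm_sq_le:
  fixes F :: "'a::real_inner \<Rightarrow> real"
  assumes gderiv: "\<And>y. GDERIV F y :> G y"
    and lipschitz: "\<And>y z. norm (G y - G z) \<le> L * norm (y - z)"
    and L_pos: "0 < L"
    and minimizer: "\<And>y. F xstar \<le> F y"
  shows "(norm (G y))\<^sup>2 \<le> 2 * L * (F y - F xstar)"
proof -
  have "F xstar \<le> F (y - (1 / L) *\<^sub>R G y)"
    by (rule minimizer)
  also have "\<dots> \<le> F y + G y \<bullet> (- ((1 / L) *\<^sub>R G y)) + L / 2 * (norm ((1 / L) *\<^sub>R G y))\<^sup>2"
    using lipschitz_gradient_upper_bound[OF gderiv lipschitz, of "y - (1 / L) *\<^sub>R G y" y] by simp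
  also have "\<dots> = F y - (norm (G y))\<^sup>2 / (2 * L)"
    using L_pos by (simp add: dot_square_norm power_mult_distrib power2_eq_square field_simps)
  finally show ?thesis
    using L_pos by (simp add: field_simps)
qed

lemma PL_constant_le_lipschitz_constant:
  fixes F :: "'a::real_inner \<Rightarrow> real"
  assumes gderiv: "\<And>y. GDERIV F y :> G y"
    and lipschitz: "\<And>y z. norm (G y - G z) \<le> L * norm (y - z)"
    and L_pos: "0 < L"
    and minimizer: "\<And>y. F xstar \<le> F y"
    and PL: "\<And>y. 2 * mu * (F y - F xstar) \<le> (norm (G y))\<^sup>2"
    and nonconstant: "F xstar < F y"
  shows "mu \<le> L"
proof -
  have "2 * mu * (F y - F xstar) \<le> 2 * L * (F y - F xstar)"
    using PL lipschitz_gradient_norm_sq_le[OF gderiv lipschitz L_pos minimizer] order_trans by blast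
  with nonconstant show ?thesis
    by simp
qed

lemma linear_recurrence_le:
  fixes e :: "nat \<Rightarrow> real"
  assumes q: "0 \<le> q" and b: "0 \<le> b"
    and step: "\<And>t. e (Suc t) \<le> q * e t + (1 - q) * b"
  shows "e t \<le> q ^ t * e 0 + b"
proof (induction t)
  case 0
  then show ?case
    using b by simp
next
  case (Suc t)
  have "e (Suc t) \<le> q * e t + (1 - q) * b"
    by (rule step)
  also have "\<dots> \<le> q * (q ^ t * e 0 + b) + (1 - q) * b"
    using Suc q by (intro add_right_mono mult_left_mono)
  also have "\<dots> = q ^ Suc t * e 0 + b"
    by (simp add: algebra_simps)
  finally show ?case .
qed

lemma PL_sufficient_decrease_rate:
  fixes F :: "'a::real_inner \<Rightarrow> real" and x :: "nat \<Rightarrow> 'a"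
  assumes gderiv: "\<And>y. GDERIV F y :> G y"
    and lipschitz: "\<And>y z. norm (G y - G z) \<le> L * norm (y - z)"
    and L_pos: "0 < L"
    and minimizer: "\<And>y. F xstar \<le> F y"
    and mu_pos: "0 < mu"
    and PL: "\<And>y. 2 * mu * (F y - F xstar) \<le> (norm (G y))\<^sup>2"
    and gamma: "0 < gamma" "gamma * L \<le> 1"
    and K: "0 \<le> K"
    and decrease: "\<And>t. F (x (Suc t)) \<le> F (x t) - gamma / 2 * (norm (G (x t)))\<^sup>2 + gamma * K"
  shows "F (x t) - F xstar \<le> (1 - gamma * mu) ^ t * (F (x 0) - F xstar) + K / mu"
proof (cases "\<exists>y. F xstar < F y")
  case True
  then have "mu \<le> L"
    using PL_constant_le_lipschitz_constant[OF gderiv lipschitz L_pos minimizer PL] by blast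
  then have "0 \<le> 1 - gamma * mu"
    using gamma mult_left_mono[of mu L gamma] by linarith
  moreover have "F (x (Suc t)) - F xstar
      \<le> (1 - gamma * mu) * (F (x t) - F xstar) + (1 - (1 - gamma * mu)) * (K / mu)" for t
  proof -
    have "gamma * mu * (F (x t) - F xstar) \<le> gamma / 2 * (norm (G (x t)))\<^sup>2"
      using mult_left_mono[OF PL[of "x t"], of "gamma / 2"] gamma by simp
    moreover have "(1 - (1 - gamma * mu)) * (K / mu) = gamma * K"
      using mu_pos by simp
    ultimately show ?thesis
      using decrease[of t] by (simp add: left_diff_distrib)
  qed
  ultimately show ?thesis
    using linear_recurrence_le[of "1 - gamma * mu" "K / mu" "\<lambda>t. F (x t) - F xstar"] K mu_pos
    by simp
next
  case False
  then have "F (x t) = F xstar" "F (x 0) = F xstar"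
    using minimizer by (simp_all add: antisym not_less)
  then show ?thesis
    using K mu_pos by simp
qed

lemma gderiv_average:
  fixes f :: "nat \<Rightarrow> 'a::real_inner \<Rightarrow> real"
  assumes "\<And>i. i < n \<Longrightarrow> GDERIV (f i) y :> g i y"
  shows "GDERIV (\<lambda>y. (\<Sum>i<n. f i y) / real n) y :> (1 / real n) *\<^sub>R (\<Sum>i<n. g i y)"
proof -
  have "((\<lambda>y. \<Sum>i<n. f i y) has_derivative (\<lambda>h. \<Sum>i<n. h \<bullet> g i y)) (at y)"
    using assms unfolding gderiv_def by (intro has_derivative_sum) auto
  then have "((\<lambda>y. (\<Sum>i<n. f i y) / real n) has_derivative (\<lambda>h. (\<Sum>i<n. h \<bullet> g i y) / real n)) (at y)"
    by (simp add: divide_inverse has_derivative_mult_left)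
  then show ?thesis
    unfolding gderiv_def by (rule has_derivative_eq_rhs) (auto simp: inner_sum_right)
qed

lemma lipschitz_average:
  fixes g :: "nat \<Rightarrow> 'a::real_normed_vector \<Rightarrow> 'b::real_normed_vector"
  assumes "0 < n"
    and "\<And>i. i < n \<Longrightarrow> norm (g i y - g i z) \<le> K * norm (y - z)"
  shows "norm ((1 / real n) *\<^sub>R (\<Sum>i<n. g i y) - (1 / real n) *\<^sub>R (\<Sum>i<n. g i z))
           \<le> K * norm (y - z)"
proof -
  have "norm ((1 / real n) *\<^sub>R (\<Sum>i<n. g i y) - (1 / real n) *\<^sub>R (\<Sum>i<n. g i z))
          = (1 / real n) * norm (\<Sum>i<n. g i y - g i z)"
    by (simp add: sum_subtractf flip: scaleR_diff_right)
  also have "\<dots> \<le> (1 / real n) * (\<Sum>i<n. K * norm (y - z))"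
    using assms(2) by (intro mult_left_mono order_trans[OF norm_sum] sum_mono) auto
  also have "\<dots> = K * norm (y - z)"
    using assms(1) by simp
  finally show ?thesis .
qed

lemma norm_usam_perturbation_le:
  fixes v :: "'a::real_normed_vector"
  assumes "0 \<le> rho" "0 \<le> lam" "lam \<le> 1"
  shows "norm ((rho * (1 - lam + lam / norm v)) *\<^sub>R v) \<le> rho * ((1 - lam) * norm v + lam)"
\<comment> \<open>Not an equality: for v = 0 the junk value lam / 0 = 0 leaves the left side 0.\<close>
proof (cases "v = 0")
  case True
  then show ?thesis
    using assms by simp
next
  case False
  then have "norm ((rho * (1 - lam + lam / norm v)) *\<^sub>R v) = rho * (1 - lam + lam / norm v) * norm v"
    using assms by simp
  also have "\<dots> = rho * ((1 - lam) * norm v + lam)"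
    using False by (simp add: field_simps)
  finally show ?thesis
    by simp
qed

lemma usam_scalar_bound:
  fixes a L gamma rho lam :: real
  assumes "0 \<le> a" "0 < L" "0 < gamma" "0 < rho" "0 \<le> lam" "lam \<le> 1"
    and stepsize: "2 * L * gamma * (2 * L\<^sup>2 * rho\<^sup>2 * (1 - lam)\<^sup>2 + 1) \<le> 1 - L * rho * (1 + 2 * (1 - lam)\<^sup>2)"
    and s: "s = rho * ((1 - lam) * a + lam)"
  shows "- gamma * a\<^sup>2 + gamma * L * a * s + L * gamma\<^sup>2 * (a\<^sup>2 + L\<^sup>2 * s\<^sup>2)
           \<le> - gamma / 2 * a\<^sup>2 + gamma * (L * rho * (1 + 2 * gamma * L\<^sup>2 * rho) * lam\<^sup>2)"
proof -
  have young_lin: "lam * a - lam\<^sup>2 \<le> a\<^sup>2 / 4"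
    using sum_squares_ge_zero[of "a / 2 - lam" 0] by (simp add: power2_eq_square algebra_simps)
  have young_sq: "((1 - lam) * a + lam)\<^sup>2 - 2 * lam\<^sup>2 \<le> 2 * (1 - lam)\<^sup>2 * a\<^sup>2"
    using sum_squares_ge_zero[of "(1 - lam) * a - lam" 0] by (simp add: power2_eq_square algebra_simps)
  have "(1 - lam) + 1 / 4 \<le> 1 / 2 + (1 - lam)\<^sup>2"
    using sum_squares_ge_zero[of "(1 - lam) - 1 / 2" 0] by (simp add: power2_eq_square algebra_simps)
  then have "L * rho * ((1 - lam) + 1 / 4) \<le> L * rho * (1 / 2 + (1 - lam)\<^sup>2)"
    using assms by (intro mult_left_mono) auto
  with stepsize have coeff: "L * rho * (1 - lam) + L * rho / 4 + L * gamma + 2 * L ^ 3 * gamma * rho\<^sup>2 * (1 - lam)\<^sup>2 \<le> 1 / 2"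
    by (simp add: algebra_simps power2_eq_square power3_eq_cube)
  have "gamma * L * rho * (lam * a - lam\<^sup>2) \<le> gamma * L * rho * (a\<^sup>2 / 4)"
    using young_lin assms by (intro mult_left_mono) auto
  moreover have "L ^ 3 * gamma\<^sup>2 * rho\<^sup>2 * (((1 - lam) * a + lam)\<^sup>2 - 2 * lam\<^sup>2)
      \<le> L ^ 3 * gamma\<^sup>2 * rho\<^sup>2 * (2 * (1 - lam)\<^sup>2 * a\<^sup>2)"
    using young_sq assms by (intro mult_left_mono) auto
  moreover have "gamma * a\<^sup>2 * (L * rho * (1 - lam) + L * rho / 4 + L * gamma + 2 * L ^ 3 * gamma * rho\<^sup>2 * (1 - lam)\<^sup>2)
      \<le> gamma * a\<^sup>2 * (1 / 2)"
    using coeff assms by (intro mult_left_mono) auto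
  ultimately show ?thesis
    unfolding s by (simp add: algebra_simps power2_eq_square power3_eq_cube)
qed

lemma usam_step_descent:
  fixes F :: "'a::real_inner \<Rightarrow> real"
  assumes gderiv: "\<And>y. GDERIV F y :> G y"
    and lipschitz: "\<And>y z. norm (G y - G z) \<le> L * norm (y - z)"
    and params: "0 < L" "0 < gamma" "0 < rho" "0 \<le> lam" "lam \<le> 1"
    and stepsize: "2 * L * gamma * (2 * L\<^sup>2 * rho\<^sup>2 * (1 - lam)\<^sup>2 + 1) \<le> 1 - L * rho * (1 + 2 * (1 - lam)\<^sup>2)"
  shows "F (x - gamma *\<^sub>R G (x + (rho * (1 - lam + lam / norm (G x))) *\<^sub>R G x))
           \<le> F x - gamma / 2 * (norm (G x))\<^sup>2 + gamma * (L * rho * (1 + 2 * gamma * L\<^sup>2 * rho) * lam\<^sup>2)"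
proof -
  define a where "a = norm (G x)"
  define s where "s = rho * ((1 - lam) * a + lam)"
  define e where "e = G (x + (rho * (1 - lam + lam / a)) *\<^sub>R G x) - G x"
  have "norm e \<le> L * norm ((rho * (1 - lam + lam / a)) *\<^sub>R G x)"
    unfolding e_def using lipschitz[of "x + (rho * (1 - lam + lam / a)) *\<^sub>R G x" x] by simp
  also have "\<dots> \<le> L * s"
    unfolding s_def a_def using params norm_usam_perturbation_le[of rho lam "G x"]
    by (intro mult_left_mono) auto
  finally have e_le: "norm e \<le> L * s" .
  have "- (a * norm e) \<le> G x \<bullet> e"
    using Cauchy_Schwarz_ineq2[of "G x" e] unfolding a_def by linarith
  then have inner_ge: "- (a * (L * s)) \<le> G x \<bullet> e"
    using mult_left_mono[OF e_le, of a] unfolding a_def by simp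
  have "norm (G x + e) \<le> a + L * s"
    unfolding a_def using norm_triangle_ineq[of "G x" e] e_le by linarith
  then have "(norm (G x + e))\<^sup>2 \<le> (a + L * s)\<^sup>2"
    by (intro power_mono) auto
  also have "\<dots> \<le> 2 * (a\<^sup>2 + L\<^sup>2 * s\<^sup>2)"
    using sum_squares_ge_zero[of "a - L * s" 0] by (simp add: power2_eq_square algebra_simps)
  finally have sq_le: "(norm (G x + e))\<^sup>2 \<le> 2 * (a\<^sup>2 + L\<^sup>2 * s\<^sup>2)" .
  have "F (x - gamma *\<^sub>R (G x + e))
      \<le> F x + G x \<bullet> (- (gamma *\<^sub>R (G x + e))) + L / 2 * (norm (gamma *\<^sub>R (G x + e)))\<^sup>2"
    using lipschitz_gradient_upper_bound[OF gderiv lipschitz, of "x - gamma *\<^sub>R (G x + e)" x] by simp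
  also have "\<dots> = F x - gamma * (a\<^sup>2 + G x \<bullet> e) + L / 2 * gamma\<^sup>2 * (norm (G x + e))\<^sup>2"
    using params by (simp add: a_def inner_add_right dot_square_norm power_mult_distrib distrib_left)
  also have "\<dots> \<le> F x + (- gamma * a\<^sup>2 + gamma * L * a * s + L * gamma\<^sup>2 * (a\<^sup>2 + L\<^sup>2 * s\<^sup>2))"
    using params inner_ge mult_left_mono[OF sq_le, of "L / 2 * gamma\<^sup>2"] mult_left_mono[OF inner_ge, of gamma]
    by (simp add: algebra_simps)
  also have "\<dots> \<le> F x - gamma / 2 * a\<^sup>2 + gamma * (L * rho * (1 + 2 * gamma * L\<^sup>2 * rho) * lam\<^sup>2)"
    using usam_scalar_bound[OF _ params stepsize s_def] unfolding a_def by simp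
  finally show ?thesis
    unfolding e_def a_def by simp
qed

theorem corollary3p4:
  fixes f :: "nat \<Rightarrow> 'a::euclidean_space \<Rightarrow> real"
    and g :: "nat \<Rightarrow> 'a \<Rightarrow> 'a"
    and L :: "nat \<Rightarrow> real"
    and n :: nat
    and mu lam rho gamma :: real
    and xstar :: 'a
    and x :: "nat \<Rightarrow> 'a"
  defines "F \<equiv> (\<lambda>y. (\<Sum>i<n. f i y) / real n)"
    and "G \<equiv> (\<lambda>y. (1 / real n) *\<^sub>R (\<Sum>i<n. g i y))"
    and "Lmax \<equiv> Max (L ` {..<n})"
  assumes n_pos: "n \<ge> 1"
    and grad: "\<And>i y. i < n \<Longrightarrow> GDERIV (f i) y :> g i y"
    and lower_bdd: "\<And>i. i < n \<Longrightarrow> bdd_below (range (f i))"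
    and smooth: "\<And>i y z. i < n \<Longrightarrow> norm (g i y - g i z) \<le> L i * norm (y - z)"
    and minimizer: "\<And>y. F xstar \<le> F y"
    and mu_pos: "mu > 0"
    and PL: "\<And>y. (norm (G y))\<^sup>2 \<ge> 2 * mu * (F y - F xstar)"
    and lam: "0 \<le> lam" "lam \<le> 1"
    and rho_pos: "rho > 0"
    and rho_le: "rho \<le> 1 / (Lmax * (1 + 2 * (1 - lam)\<^sup>2))"
    and gamma_pos: "gamma > 0"
    and gamma_le: "gamma \<le> (1 - Lmax * rho * (1 + 2 * (1 - lam)\<^sup>2))
                      / (2 * Lmax * (2 * Lmax\<^sup>2 * rho\<^sup>2 * (1 - lam)\<^sup>2 + 1))"
    and iter: "\<And>t. x (Suc t) = x t - gamma *\<^sub>R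
                 G (x t + (rho * (1 - lam + lam / norm (G (x t)))) *\<^sub>R G (x t))"
  shows "F (x t) - F xstar \<le> (1 - gamma * mu) ^ t * (F (x 0) - F xstar)
           + Lmax * rho * (1 + 2 * gamma * Lmax\<^sup>2 * rho) * lam\<^sup>2 / mu"
proof -
  have Lmax_ge: "L i \<le> Lmax" if "i < n" for i
    unfolding Lmax_def using that by (intro Max_ge) auto
  have Lmax_pos: "0 < Lmax"
  proof -
    have "0 < 1 / (Lmax * (1 + 2 * (1 - lam)\<^sup>2))"
      using rho_le rho_pos by linarith
    moreover have "0 < 1 + 2 * (1 - lam)\<^sup>2"
      by (simp add: add_pos_nonneg)
    ultimately show ?thesis
      by (simp add: zero_less_mult_iff)
  qed
  have gradF: "GDERIV F y :> G y" for y
    unfolding F_def G_def using grad by (rule gderiv_average)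
  have lipG: "norm (G y - G z) \<le> Lmax * norm (y - z)" for y z
    unfolding G_def using n_pos smooth Lmax_ge
    by (intro lipschitz_average) (auto intro!: order_trans[OF smooth] mult_right_mono)
  have stepsize: "2 * Lmax * gamma * (2 * Lmax\<^sup>2 * rho\<^sup>2 * (1 - lam)\<^sup>2 + 1)
      \<le> 1 - Lmax * rho * (1 + 2 * (1 - lam)\<^sup>2)"
  proof -
    have "0 < 2 * Lmax * (2 * Lmax\<^sup>2 * rho\<^sup>2 * (1 - lam)\<^sup>2 + 1)"
      using Lmax_pos by (simp add: add_nonneg_pos)
    then show ?thesis
      using gamma_le by (simp add: pos_le_divide_eq mult_ac)
  qed
  show ?thesis
  proof (rule PL_sufficient_decrease_rate[OF gradF lipG Lmax_pos minimizer mu_pos PL gamma_pos])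
    have "2 * Lmax * gamma * 1 \<le> 2 * Lmax * gamma * (2 * Lmax\<^sup>2 * rho\<^sup>2 * (1 - lam)\<^sup>2 + 1)"
      using Lmax_pos gamma_pos by (intro mult_left_mono) auto
    moreover have "0 \<le> Lmax * rho * (1 + 2 * (1 - lam)\<^sup>2)"
      using Lmax_pos rho_pos by simp
    ultimately show "gamma * Lmax \<le> 1"
      using stepsize by (simp add: mult_ac)
    show "0 \<le> Lmax * rho * (1 + 2 * gamma * Lmax\<^sup>2 * rho) * lam\<^sup>2"
      using Lmax_pos rho_pos gamma_pos by simp
    show "F (x (Suc t)) \<le> F (x t) - gamma / 2 * (norm (G (x t)))\<^sup>2
        + gamma * (Lmax * rho * (1 + 2 * gamma * Lmax\<^sup>2 * rho) * lam\<^sup>2)" for t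
      unfolding iter by (rule usam_step_descent[OF gradF lipG Lmax_pos gamma_pos rho_pos lam stepsize])
  qed
qed

end
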